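(* Let $S$ be a memory system satisfying the Causality assumption, let $n,m,v\ge1$, and let $\Omega$ be a witness for $S(n,m,v)$. For every unambiguous trace $\tau$ of $S(n,m,v)$, every location $1\le i\le m$, and all $r,s,t\in L(\tau,i)$: if $\langle r,s\rangle\in\Omega^e(\tau,i)$, then $\langle r,t\rangle\in\Omega^e(\tau,i)$ or $\langle t,s\rangle\in\Omega^e(\tau,i)$.
   Context: Notation: $\mathbb{N}_n=\{1,\dots,n\}$, $\mathbb{W}_n=\{0,\dots,n\}$. Memory events $E(n,m,v)=\{R,W\}\times\mathbb{N}_n\times\mathbb{N}_m\times\mathbb{W}_v$; for $e=\langle a,b,c,d\rangle$, $op(e)=a$, $proc(e)=b$, $loc(e)=c$, $data(e)=d$; $0$ models the initial value of every location. A memory system is a family $S=(S(n,m,v))_{n,m,v\ge1}$, $S(n,m,v)$ a regular set of finite runs over an alphabet $E^a(n,m,v)\supseteq E(n,m,v)$ (other letters are internal events). The trace of a run is its subsequence of memory events; traces of $S(n,m,v)$ are traces of its runs. For a sequence $\tau$ of memory events: $L(\tau,j)=\{k: loc(\tau(k))=j\}$, $L^w(\tau,j)=\{k\in L(\tau,j): op(\tau(k))=W\}$, $L^r(\tau,j)=\{k\in L(\tau,j): op(\tau(k))=R\}$. A trace $\tau$ is unambiguous if for every location $j$ and $x\in L^w(\tau,j)$, $data(\tau(x))\ne0$ and $data(\tau(x))\ne data(\tau(y))$ for all $y\in L^w(\tau,j)\setminus\{x\}$. Causality assumption: for all $n,m,v\ge1$, every trace $\tau$ of $S(n,m,v)$,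 every location $j$ and every $x\in L^r(\tau,j)$, either $data(\tau(x))=0$ or there is $y\in L^w(\tau,j)$ with $data(\tau(x))=data(\tau(y))$. A witness $\Omega$ for $S(n,m,v)$ assigns to every trace $\tau$ of $S(n,m,v)$ and location $j$ a strict total order $\Omega(\tau,j)$ on $L^w(\tau,j)$. For an unambiguous trace $\tau$, the relation $\Omega^e(\tau,j)\subseteq L(\tau,j)\times L(\tau,j)$ is defined by: $\langle x,y\rangle\in\Omega^e(\tau,j)$ iff (1) $data(\tau(x))=data(\tau(y))$, $op(\tau(x))=W$ and $op(\tau(y))=R$; or (2) $data(\tau(x))=0$ and $data(\tau(y))\ne0$; or (3) there are $a,b\in L^w(\tau,j)$ with $\langle a,b\rangle\in\Omega(\tau,j)$, $data(\tau(a))=data(\tau(x))$ and $data(\tau(b))=data(\tau(y))$. *)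

theory Defs
  imports Main
begin

datatype mop = R | W

type_synonym mevent = "mop \<times> nat \<times> nat \<times> nat"

definition op :: "mevent \<Rightarrow> mop" where "op e = fst e"
definition proc :: "mevent \<Rightarrow> nat" where "proc e = fst (snd e)"
definition loc :: "mevent \<Rightarrow> nat" where "loc e = fst (snd (snd e))"
definition data :: "mevent \<Rightarrow> nat" where "data e = snd (snd (snd e))"

definition E :: "nat \<Rightarrow> nat \<Rightarrow> nat \<Rightarrow> mevent set" where
  "E n m v = UNIV \<times> {1..n} \<times> {1..m} \<times> {0..v}"

text \<open>Runs are words over E^a(n,m,v) = E(n,m,v) plus internal events (Inr letters).\<close>
definition Ea :: "(nat \<Rightarrow> nat \<Rightarrow> nat \<Rightarrow> 'i set) \<Rightarrow> nat \<Rightarrow> nat \<Rightarrow> nat \<Rightarrow> (mevent + 'i) set" where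
  "Ea Iev n m v = Inl ` E n m v \<union> Inr ` Iev n m v"

definition regular_on :: "'a set \<Rightarrow> 'a list set \<Rightarrow> bool" where
  "regular_on A L \<longleftrightarrow> finite A \<and> (\<exists>(Q::nat set) q0 \<delta> F. finite Q \<and> q0 \<in> Q \<and> F \<subseteq> Q \<and>
     (\<forall>q\<in>Q. \<forall>a\<in>A. \<delta> q a \<in> Q) \<and>
     L = {w. set w \<subseteq> A \<and> fold (\<lambda>a q. \<delta> q a) w q0 \<in> F})"

definition memory_system ::
  "(nat \<Rightarrow> nat \<Rightarrow> nat \<Rightarrow> 'i set) \<Rightarrow> (nat \<Rightarrow> nat \<Rightarrow> nat \<Rightarrow> (mevent + 'i) list set) \<Rightarrow> bool" where
  "memory_system Iev S \<longleftrightarrow>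
     (\<forall>n m v. n \<ge> 1 \<and> m \<ge> 1 \<and> v \<ge> 1 \<longrightarrow> regular_on (Ea Iev n m v) (S n m v))"

definition trace :: "(mevent + 'i) list \<Rightarrow> mevent list" where
  "trace r = map projl (filter isl r)"

definition traces :: "(nat \<Rightarrow> nat \<Rightarrow> nat \<Rightarrow> (mevent + 'i) list set) \<Rightarrow> nat \<Rightarrow> nat \<Rightarrow> nat \<Rightarrow> mevent list set" where
  "traces S n m v = trace ` S n m v"

text \<open>Positions are 0-based list indices.\<close>
definition Lset :: "mevent list \<Rightarrow> nat \<Rightarrow> nat set" where
  "Lset \<tau> j = {k. k < length \<tau> \<and> loc (\<tau> ! k) = j}"
definition Lw :: "mevent list \<Rightarrow> nat \<Rightarrow> nat set" where
  "Lw \<tau> j = {k \<in> Lset \<tau> j. op (\<tau> ! k) = W}"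
definition Lr :: "mevent list \<Rightarrow> nat \<Rightarrow> nat set" where
  "Lr \<tau> j = {k \<in> Lset \<tau> j. op (\<tau> ! k) = R}"

definition unambiguous :: "mevent list \<Rightarrow> bool" where
  "unambiguous \<tau> \<longleftrightarrow> (\<forall>j. \<forall>x \<in> Lw \<tau> j. data (\<tau> ! x) \<noteq> 0 \<and>
      (\<forall>y \<in> Lw \<tau> j - {x}. data (\<tau> ! x) \<noteq> data (\<tau> ! y)))"

definition causality :: "(nat \<Rightarrow> nat \<Rightarrow> nat \<Rightarrow> (mevent + 'i) list set) \<Rightarrow> bool" where
  "causality S \<longleftrightarrow> (\<forall>n m v. n \<ge> 1 \<and> m \<ge> 1 \<and> v \<ge> 1 \<longrightarrow>
     (\<forall>\<tau> \<in> traces S n m v. \<forall>j. \<forall>x \<in> Lr \<tau> j.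
        data (\<tau> ! x) = 0 \<or> (\<exists>y \<in> Lw \<tau> j. data (\<tau> ! x) = data (\<tau> ! y))))"

definition witness ::
  "(nat \<Rightarrow> nat \<Rightarrow> nat \<Rightarrow> (mevent + 'i) list set) \<Rightarrow> nat \<Rightarrow> nat \<Rightarrow> nat \<Rightarrow>
   (mevent list \<Rightarrow> nat \<Rightarrow> (nat \<times> nat) set) \<Rightarrow> bool" where
  "witness S n m v \<Omega> \<longleftrightarrow> (\<forall>\<tau> \<in> traces S n m v. \<forall>j \<in> {1..m}.
      \<Omega> \<tau> j \<subseteq> Lw \<tau> j \<times> Lw \<tau> j \<and> strict_linear_order_on (Lw \<tau> j) (\<Omega> \<tau> j))"

definition Omega_e :: "(mevent list \<Rightarrow> nat \<Rightarrow> (nat \<times> nat) set) \<Rightarrow> mevent list \<Rightarrow> nat \<Rightarrow> (nat \<times> nat) set" where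
  "Omega_e \<Omega> \<tau> j = {(x, y). x \<in> Lset \<tau> j \<and> y \<in> Lset \<tau> j \<and>
     ((data (\<tau> ! x) = data (\<tau> ! y) \<and> op (\<tau> ! x) = W \<and> op (\<tau> ! y) = R) \<or>
      (data (\<tau> ! x) = 0 \<and> data (\<tau> ! y) \<noteq> 0) \<or>
      (\<exists>a \<in> Lw \<tau> j. \<exists>b \<in> Lw \<tau> j. (a, b) \<in> \<Omega> \<tau> j \<and>
          data (\<tau> ! a) = data (\<tau> ! x) \<and> data (\<tau> ! b) = data (\<tau> ! y)))}"

end

theory Submission
  imports Defs
begin

text \<open>
  \<open>\<Omega>\<^sup>e(\<tau>, i)\<close> is the pull-back, along \<open>k \<mapsto> (data(\<tau>(k)), op(\<tau>(k)))\<close>,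
  of the lexicographic product of two orders: on data values, \<open>0\<close> first and the written
  values ordered as their (by unambiguity unique) writes are ordered by \<open>\<Omega>(\<tau>, i)\<close>;
  on operations, \<open>W < R\<close>, so a write comes just before the reads of its value. Causality
  guarantees that every value read is \<open>0\<close> or written, so all positions of location \<open>i\<close>
  land where this product is total, and the pull-back of a transitive relation that is
  total on the image is negatively transitive.
\<close>

lemma trans_total_on_split:
  assumes "trans r" "total_on A r" "x \<in> A" "z \<in> A" "(x, y) \<in> r"
  shows "(x, z) \<in> r \<or> (z, y) \<in> r"
  using assms unfolding trans_def total_on_def by metis

lemma trans_map_prod_image:
  assumes "trans r" "inj_on f (Field r)"
  shows "trans (map_prod f f ` r)"
proof (rule transI)
  fix x y z
  assume "(x, y) \<in> map_prod f f ` r" "(y, z) \<in> map_prod f f ` r"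
  then obtain a b b' c where "(a, b) \<in> r" "(b', c) \<in> r" "f b = f b'"
    and xyz: "x = f a" "y = f b" "z = f c"
    by auto
  then have "b = b'"
    using assms(2) by (auto intro: inj_onD FieldI1 FieldI2)
  with \<open>(a, b) \<in> r\<close> \<open>(b', c) \<in> r\<close> have "(a, c) \<in> r"
    using assms(1) by (auto dest: transD)
  then show "(x, z) \<in> map_prod f f ` r"
    unfolding xyz by force
qed

lemma total_on_map_prod_image:
  assumes "total_on A r"
  shows "total_on (f ` A) (map_prod f f ` r)"
  using assms unfolding total_on_def by (fastforce intro: image_eqI)

lemma trans_insert_bottom:
  assumes "trans r" "z \<notin> Field r"
  shows "trans ({(z, b) | b. b \<noteq> z} \<union> r)"
  using assms unfolding trans_def by (auto intro: FieldI1 FieldI2)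

lemma total_on_insert_bottom:
  assumes "total_on B r"
  shows "total_on (insert z B) ({(z, b) | b. b \<noteq> z} \<union> r)"
  using assms unfolding total_on_def by auto

definition value_order ::
  "(mevent list \<Rightarrow> nat \<Rightarrow> (nat \<times> nat) set) \<Rightarrow> mevent list \<Rightarrow> nat \<Rightarrow> (nat \<times> nat) set"
where
  "value_order \<Omega> \<tau> j = {(0, d) | d. d \<noteq> 0} \<union>
     map_prod (\<lambda>k. data (\<tau> ! k)) (\<lambda>k. data (\<tau> ! k)) ` (\<Omega> \<tau> j \<inter> Lw \<tau> j \<times> Lw \<tau> j)"

lemma Omega_e_eq_inv_image:
  "Omega_e \<Omega> \<tau> j =
     inv_image (value_order \<Omega> \<tau> j <*lex*> {(W, R)}) (\<lambda>k. (data (\<tau> ! k), op (\<tau> ! k)))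
       \<inter> Lset \<tau> j \<times> Lset \<tau> j" (is "_ = ?rhs")
proof (intro set_eqI, clarify)
  fix x y
  have "(data (\<tau> ! x), data (\<tau> ! y)) \<in> value_order \<Omega> \<tau> j \<longleftrightarrow>
      data (\<tau> ! x) = 0 \<and> data (\<tau> ! y) \<noteq> 0 \<or>
      (\<exists>a \<in> Lw \<tau> j. \<exists>b \<in> Lw \<tau> j. (a, b) \<in> \<Omega> \<tau> j \<and>
          data (\<tau> ! a) = data (\<tau> ! x) \<and> data (\<tau> ! b) = data (\<tau> ! y))"
    unfolding value_order_def by force
  then show "(x, y) \<in> Omega_e \<Omega> \<tau> j \<longleftrightarrow> (x, y) \<in> ?rhs"
    unfolding Omega_e_def by auto
qed

lemma
  assumes "unambiguous \<tau>" "trans (\<Omega> \<tau> j)" "total_on (Lw \<tau> j) (\<Omega> \<tau> j)"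
  shows trans_value_order: "trans (value_order \<Omega> \<tau> j)"
    and total_on_value_order:
      "total_on (insert 0 ((\<lambda>k. data (\<tau> ! k)) ` Lw \<tau> j)) (value_order \<Omega> \<tau> j)"
proof -
  define f where "f k = data (\<tau> ! k)" for k
  define \<omega> where "\<omega> = \<Omega> \<tau> j \<inter> Lw \<tau> j \<times> Lw \<tau> j"
  have "Field \<omega> \<subseteq> Lw \<tau> j"
    unfolding \<omega>_def Field_def by blast
  moreover have "inj_on f (Lw \<tau> j)" and "0 \<notin> f ` Lw \<tau> j"
    using assms(1) unfolding unambiguous_def f_def inj_on_def by (blast, force)
  ultimately have "inj_on f (Field \<omega>)" and "0 \<notin> Field (map_prod f f ` \<omega>)"
    by (auto simp: inj_on_subset Field_def)
  moreover have "trans \<omega>"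
    using assms(2) unfolding \<omega>_def trans_def by blast
  ultimately show "trans (value_order \<Omega> \<tau> j)"
    unfolding value_order_def f_def[symmetric] \<omega>_def[symmetric]
    by (intro trans_insert_bottom trans_map_prod_image)
  have "total_on (Lw \<tau> j) \<omega>"
    using assms(3) unfolding \<omega>_def total_on_def by blast
  then show "total_on (insert 0 (f ` Lw \<tau> j)) (value_order \<Omega> \<tau> j)"
    unfolding value_order_def f_def[symmetric] \<omega>_def[symmetric]
    by (intro total_on_insert_bottom total_on_map_prod_image)
qed

lemma data_in_written_values:
  assumes "causality S" "n \<ge> 1" "m \<ge> 1" "v \<ge> 1" "\<tau> \<in> traces S n m v" "x \<in> Lset \<tau> j"
  shows "data (\<tau> ! x) \<in> insert 0 ((\<lambda>k. data (\<tau> ! k)) ` Lw \<tau> j)"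
proof (cases "op (\<tau> ! x)")
  case R
  then have "x \<in> Lr \<tau> j"
    using assms(6) unfolding Lr_def by simp
  then show ?thesis
    using assms(1-5) unfolding causality_def by fastforce
next
  case W
  then show ?thesis
    using assms(6) unfolding Lw_def by simp
qed

lemma trans_write_before_read: "trans {(W, R)}"
  by (auto simp: trans_def)

lemma total_on_write_before_read: "total_on UNIV {(W, R)}"
proof (rule total_onI)
  fix x y :: mop
  show "x \<noteq> y \<Longrightarrow> (x, y) \<in> {(W, R)} \<or> (y, x) \<in> {(W, R)}"
    by (cases x; cases y) simp_all
qed

theorem lemma5p1:
  fixes Iev :: "nat \<Rightarrow> nat \<Rightarrow> nat \<Rightarrow> 'i set"
    and S :: "nat \<Rightarrow> nat \<Rightarrow> nat \<Rightarrow> (mevent + 'i) list set"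
  assumes "memory_system Iev S"
    and "causality S"
    and "n \<ge> 1" "m \<ge> 1" "v \<ge> 1"
    and "witness S n m v \<Omega>"
    and "\<tau> \<in> traces S n m v" "unambiguous \<tau>"
    and "i \<in> {1..m}"
    and "r \<in> Lset \<tau> i" "s \<in> Lset \<tau> i" "t \<in> Lset \<tau> i"
    and "(r, s) \<in> Omega_e \<Omega> \<tau> i"
  shows "(r, t) \<in> Omega_e \<Omega> \<tau> i \<or> (t, s) \<in> Omega_e \<Omega> \<tau> i"
proof -
  let ?key = "\<lambda>k. (data (\<tau> ! k), op (\<tau> ! k))"
  let ?order = "value_order \<Omega> \<tau> i <*lex*> {(W, R)}"
  let ?keys = "insert 0 ((\<lambda>k. data (\<tau> ! k)) ` Lw \<tau> i) \<times> UNIV"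
  have "strict_linear_order_on (Lw \<tau> i) (\<Omega> \<tau> i)"
    using assms(6,7,9) unfolding witness_def by blast
  then have \<Omega>_trans: "trans (\<Omega> \<tau> i)" and \<Omega>_total: "total_on (Lw \<tau> i) (\<Omega> \<tau> i)"
    unfolding strict_linear_order_on_def by simp_all
  have "trans ?order"
    using trans_value_order[where \<Omega> = \<Omega> and j = i, OF assms(8) \<Omega>_trans \<Omega>_total]
      trans_write_before_read
    by (rule trans_lex_prod)
  moreover have "total_on ?keys ?order"
    using total_on_value_order[where \<Omega> = \<Omega> and j = i, OF assms(8) \<Omega>_trans \<Omega>_total]
      total_on_write_before_read
    by (rule total_on_lex_prod)
  moreover have "?key r \<in> ?keys" "?key t \<in> ?keys"
    using data_in_written_values[OF assms(2-5,7)] assms(10,12) by auto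
  moreover have "(?key r, ?key s) \<in> ?order"
    using assms(13) unfolding Omega_e_eq_inv_image by simp
  ultimately have "(?key r, ?key t) \<in> ?order \<or> (?key t, ?key s) \<in> ?order"
    by (rule trans_total_on_split)
  then show ?thesis
    using assms(10-12) unfolding Omega_e_eq_inv_image by simp
qed

end
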